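(* Let $n\ge 1$, let $\mu\in\mathbb{R}^n\setminus\{0\}$ and $\alpha\in\,]0,1/2[$. Let $\mathcal{D}=\mathbb{R}^n\setminus\{0,-\mu\}$ and define $\phi:\mathcal{D}\to\mathbb{R}^+$ by $$\phi(x)=Y(x)^\top Y(x),\qquad Y(x)=\|x\|^{-2\alpha}x-\|x+\mu\|^{-2\alpha}(x+\mu).$$ Then the global maximum of $\phi$ on $\mathcal{D}$ is attained at $x=-\mu/2$.
   Context: $\|\cdot\|$ denotes the Euclidean norm on $\mathbb{R}^n$. *)

theory Defs
  imports "HOL-Analysis.Analysis"
begin

definition Yfun :: "real \<Rightarrow> real ^ 'n \<Rightarrow> real ^ 'n \<Rightarrow> real ^ 'n" where
  "Yfun \<alpha> \<mu> x = (norm x powr (-2 * \<alpha>)) *\<^sub>R x - (norm (x + \<mu>) powr (-2 * \<alpha>)) *\<^sub>R (x + \<mu>)"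

definition phi :: "real \<Rightarrow> real ^ 'n \<Rightarrow> real ^ 'n \<Rightarrow> real" where
  "phi \<alpha> \<mu> x = Yfun \<alpha> \<mu> x \<bullet> Yfun \<alpha> \<mu> x"

definition domD :: "real ^ 'n \<Rightarrow> (real ^ 'n) set" where
  "domD \<mu> = UNIV - {0, -\<mu>}"

end

(* Write r = |x|, s = |x + mu|, m = |mu|, p = 2 alpha, k = r^(-p) and l = s^(-p).
   Expanding the square gives phi(x) = a + k l m^2 with a = (k - l) (k r^2 - l s^2) <= 0,
   because t^(-p) decreases while t^(2-p) increases.  For M = r + s,
   a + k l M^2 = (r^(1-p) + s^(1-p))^2 <= 4 (M/2)^(2-2p) by concavity of t^(1-p).
   Since a <= 0 and m <= M (triangle inequality), a + k l m^2 <= (a + k l M^2) (m/M)^(2-2p),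
   so phi(x) <= 4 (m/2)^(2-2p), which is phi(-mu/2). *)

theory Submission
  imports Defs
begin

lemma powr_midpoint_concave:
  fixes q r s :: real
  assumes "0 \<le> q" "q \<le> 1" "0 < r" "0 < s"
  shows "r powr q + s powr q \<le> 2 * ((r + s) / 2) powr q"
proof -
  define c where "c = (r + s) / 2"
  have c: "c > 0" using assms by (simp add: c_def)
  have "r powr q * c powr (1 - q) + s powr q * c powr (1 - q) \<le> q * (r + s) + (1 - q) * (2 * c)"
    using add_mono [OF Youngs_inequality_0 [of q "1 - q" r c] Youngs_inequality_0 [of q "1 - q" s c]]
      assms c by (simp add: algebra_simps)
  also have "\<dots> = 2 * c" unfolding c_def by (simp add: field_simps)
  also have "\<dots> = 2 * c powr q * c powr (1 - q)"
    using c by (simp flip: powr_add)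
  finally show ?thesis
    using c by (simp add: c_def flip: distrib_right)
qed

lemma powr_diff_mult_powr_diff_nonpos:
  fixes p r s :: real
  assumes "0 \<le> p" "p \<le> 2" "0 < r" "0 < s"
  shows "(r powr -p - s powr -p) * (r powr (2 - p) - s powr (2 - p)) \<le> 0"
proof (cases "r \<le> s")
  case True
  then show ?thesis
    using assms powr_mono2 [of "2 - p" r s] powr_mono2' [of "-p" r s]
    by (simp add: mult_nonneg_nonpos)
next
  case False
  then show ?thesis
    using assms powr_mono2 [of "2 - p" s r] powr_mono2' [of "-p" s r]
    by (simp add: mult_nonpos_nonneg)
qed

lemma quadratic_offset_le_scaled:
  fixes a b m M q :: real
  assumes "a \<le> 0" "0 \<le> b" "0 < m" "m \<le> M" "0 \<le> q" "q \<le> 2"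
  shows "a + b * m\<^sup>2 \<le> (a + b * M\<^sup>2) * (m / M) powr q"
proof -
  define t where "t = m / M"
  have t: "0 < t" "t \<le> 1" using assms by (auto simp: t_def)
  have "t\<^sup>2 \<le> t powr q"
    using t powr_mono' [of q 2 t] assms by (simp add: powr_realpow)
  moreover have "t powr q \<le> 1" using t assms by (simp add: powr_le1)
  moreover have "m = t * M" using assms by (simp add: t_def)
  ultimately have "a + b * m\<^sup>2 = a + b * M\<^sup>2 * t\<^sup>2"
    by (simp add: power_mult_distrib)
  also have "\<dots> \<le> a * t powr q + b * M\<^sup>2 * t powr q"
  proof (rule add_mono)
    show "a \<le> a * t powr q"
      using \<open>a \<le> 0\<close> \<open>t powr q \<le> 1\<close> by (simp add: mult_le_cancel_left1)
    show "b * M\<^sup>2 * t\<^sup>2 \<le> b * M\<^sup>2 * t powr q"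
      using \<open>t\<^sup>2 \<le> t powr q\<close> \<open>0 \<le> b\<close> by (simp add: mult_left_mono)
  qed
  finally show ?thesis by (simp add: t_def distrib_right)
qed

lemma power2_norm_scaleR_diff:
  fixes x y :: "'a :: real_inner"
  shows "(norm (a *\<^sub>R x - b *\<^sub>R y))\<^sup>2 =
    a\<^sup>2 * (norm x)\<^sup>2 + b\<^sup>2 * (norm y)\<^sup>2 - a * b * ((norm x)\<^sup>2 + (norm y)\<^sup>2 - (norm (x - y))\<^sup>2)"
  unfolding power2_norm_eq_inner
  by (simp add: inner_diff_left inner_diff_right inner_commute power2_eq_square algebra_simps)

definition phi_radial :: "real \<Rightarrow> real \<Rightarrow> real \<Rightarrow> real \<Rightarrow> real" where
  "phi_radial p r s m =
    (r powr -p)\<^sup>2 * r\<^sup>2 + (s powr -p)\<^sup>2 * s\<^sup>2 - r powr -p * s powr -p * (r\<^sup>2 + s\<^sup>2 - m\<^sup>2)"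

lemma phi_eq_phi_radial:
  "phi \<alpha> \<mu> x = phi_radial (2 * \<alpha>) (norm x) (norm (x + \<mu>)) (norm \<mu>)"
proof -
  have "phi \<alpha> \<mu> x = (norm (Yfun \<alpha> \<mu> x))\<^sup>2"
    by (simp add: phi_def power2_norm_eq_inner)
  then show ?thesis
    by (simp add: Yfun_def power2_norm_scaleR_diff phi_radial_def)
qed

lemma phi_radial_midpoint:
  "phi_radial p (m / 2) (m / 2) m = ((m / 2) powr -p * m)\<^sup>2"
  by (simp add: phi_radial_def power2_eq_square algebra_simps)

lemma phi_radial_le_midpoint:
  fixes p r s m :: real
  assumes "0 \<le> p" "p \<le> 1" "0 < r" "0 < s" "0 < m" "m \<le> r + s"
  shows "phi_radial p r s m \<le> phi_radial p (m / 2) (m / 2) m"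
proof -
  define k l M where "k = r powr -p" and "l = s powr -p" and "M = r + s"
  have kl: "0 < k * l" using assms by (simp add: k_def l_def)
  have r2: "k * r\<^sup>2 = r powr (2 - p)" and s2: "l * s\<^sup>2 = s powr (2 - p)"
    using assms by (simp_all add: k_def l_def powr_diff powr_minus field_simps)
  have r1: "k * r = r powr (1 - p)" and s1: "l * s = s powr (1 - p)"
    using assms by (simp_all add: k_def l_def powr_diff powr_minus field_simps)
  define a where "a = (k - l) * (k * r\<^sup>2 - l * s\<^sup>2)"
  have a: "a \<le> 0"
    unfolding a_def r2 s2 unfolding k_def l_def
    using assms by (intro powr_diff_mult_powr_diff_nonpos) auto
  have "a + k * l * M\<^sup>2 = (k * r + l * s)\<^sup>2"
    by (simp add: a_def M_def power2_eq_square algebra_simps)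
  also have "\<dots> \<le> (2 * (M / 2) powr (1 - p))\<^sup>2"
  proof (rule power_mono)
    show "k * r + l * s \<le> 2 * (M / 2) powr (1 - p)"
      unfolding r1 s1 M_def using assms by (intro powr_midpoint_concave) auto
    show "0 \<le> k * r + l * s"
      using assms by (simp add: k_def l_def)
  qed
  finally have aM: "a + k * l * M\<^sup>2 \<le> (2 * (M / 2) powr (1 - p))\<^sup>2" .
  have "phi_radial p r s m = a + k * l * m\<^sup>2"
    by (simp add: phi_radial_def a_def k_def l_def power2_eq_square algebra_simps)
  also have "\<dots> \<le> (a + k * l * M\<^sup>2) * (m / M) powr (2 - 2 * p)"
    using a kl assms by (intro quadratic_offset_le_scaled) (auto simp: M_def)
  also have "\<dots> \<le> (2 * (M / 2) powr (1 - p))\<^sup>2 * (m / M) powr (2 - 2 * p)"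
    using aM by (simp add: mult_right_mono)
  also have "\<dots> = (2 * ((M / 2) powr (1 - p) * (m / M) powr (1 - p)))\<^sup>2"
  proof -
    have "(m / M) powr (2 - 2 * p) = ((m / M) powr (1 - p))\<^sup>2"
      by (simp add: power2_eq_square flip: powr_add)
    then show ?thesis by (simp add: power_mult_distrib)
  qed
  also have "(M / 2) powr (1 - p) * (m / M) powr (1 - p) = (m / 2) powr (1 - p)"
  proof -
    have "0 < M" using assms by (simp add: M_def)
    then have "M / 2 * (m / M) = m / 2" "0 \<le> M / 2" "0 \<le> m / M"
      using assms by simp_all
    then show ?thesis by (metis powr_mult)
  qed
  also have "2 * (m / 2) powr (1 - p) = (m / 2) powr -p * m"
    using assms by (simp add: powr_diff powr_minus field_simps)
  also have "((m / 2) powr -p * m)\<^sup>2 = phi_radial p (m / 2) (m / 2) m"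
    by (rule phi_radial_midpoint [symmetric])
  finally show ?thesis .
qed

theorem lemma5:
  fixes \<mu> :: "real ^ 'n" and \<alpha> :: real
  assumes "\<mu> \<noteq> 0" and "0 < \<alpha>" and "\<alpha> < 1/2"
  shows "- (1/2) *\<^sub>R \<mu> \<in> domD \<mu> \<and>
         (\<forall>x \<in> domD \<mu>. phi \<alpha> \<mu> x \<le> phi \<alpha> \<mu> (- (1/2) *\<^sub>R \<mu>))"
proof -
  define c where "c = - (1/2) *\<^sub>R \<mu>"
  have "c \<in> domD \<mu>"
    using assms(1) scaleR_cancel_right [of "1/2" \<mu> 1] by (auto simp: c_def domD_def)
  moreover have "phi \<alpha> \<mu> x \<le> phi \<alpha> \<mu> c" if "x \<in> domD \<mu>" for x
  proof -
    have "norm c = norm \<mu> / 2"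
      by (simp add: c_def)
    moreover have "c + \<mu> = (1 - 1/2) *\<^sub>R \<mu>"
      unfolding c_def
      by (simp only: scaleR_left_diff_distrib scaleR_one scaleR_minus_left uminus_add_conv_diff)
    then have "norm (c + \<mu>) = norm \<mu> / 2"
      by (simp only:) simp
    moreover have "phi_radial (2 * \<alpha>) (norm x) (norm (x + \<mu>)) (norm \<mu>)
        \<le> phi_radial (2 * \<alpha>) (norm \<mu> / 2) (norm \<mu> / 2) (norm \<mu>)"
    proof (rule phi_radial_le_midpoint)
      show "0 < norm x" "0 < norm (x + \<mu>)"
        using that by (auto simp: domD_def add_eq_0_iff2)
      show "norm \<mu> \<le> norm x + norm (x + \<mu>)"
        using norm_triangle_ineq4 [of "x + \<mu>" x] by simp
    qed (use assms in auto)
    ultimately show ?thesis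
      by (simp only: phi_eq_phi_radial)
  qed
  ultimately show ?thesis by (simp add: c_def)
qed

end
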